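(* Let $L:G\to\mathcal{L}$ be a friendly labeling function, $T$ a tree with root edge, and $e$ an interior edge of $T$. Let $\lambda^-\in{\rm im}(L^{T_{e,-}})$ and $\lambda^+\in{\rm im}(L^{T_{e,+}})$ with $\lambda^-(e)=\lambda^+(e)$. Then the labeling $\lambda:E(T)\to\mathcal{L}$ which agrees with $\lambda^-$ on the edges of $T_{e,-}$ and with $\lambda^+$ on the edges of $T_{e,+}$ is consistent, i.e. $\lambda\in{\rm im}(L^T)$.
   Context: Let $G$ be a finite abelian group written additively, $\mathcal{L}$ a finite set, $L:G\to\mathcal{L}$ a function. A tree with root edge is a finite tree $T$ with a distinguished leaf $\rho$; the edge at $\rho$ is the root edge. Every vertex $v\neq\rho$ has a unique parent edge (first edge on the path from $v$ to $\rho$); other edges at $v$ are child edges. Vertices that are neither $\rho$ nor leaves are interior vertices; an edge is interior if both endpoints are interior vertices. $E(T)$ is the edge set. An edge $e'$ is below $e$ if $e$ lies on the path from $\rho$ to $e'$ (so $e$ is below itself). A map $h:E(T)\to G$ is a consistent assignment if for every interior vertex $v$, $h(\text{parent edge of }v)=\sum h(\text{child edges of }v)$. ${\rm im}(L^T)=\{L\circ h: h\text{ consistent}\}\subseteq\mathcal{L}^{E(T)}$ is the set of consistent labelings. For an edge $e$, $T_{e,-}$ is the tree formed by all edges below $e$, regarded as a tree with root edge $e$ (distinguished leaf = endpoint of $e$ closer to $\rho$); $T_{e,+}$ is the tree formed by $e$ and all edges not below $e$, with the same $\rho$ (the endpoint of $e$ farther from $\rho$ becomes a leaf). Friendliness: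 for $m\ge3$ let $Z_m=\{(g_1,\dots,g_m)\in G^m: g_1+\cdots+g_{m-1}=g_m\}$ and $\widetilde{L}(g_1,\dots,g_m)=(L(g_1),\dots,L(g_m))$; $L$ is $m$-friendly if for every $l\in\widetilde{L}(Z_m)$ and every $i$, the set of $i$-th coordinates of elements of $\widetilde{L}^{-1}(l)$ equals $L^{-1}(l_i)$; $L$ is friendly if it is $m$-friendly for all $m\ge3$. *)

theory Defs
  imports Main
begin

definition vpath :: "'v set set \<Rightarrow> 'v list \<Rightarrow> bool" where
  "vpath E p \<longleftrightarrow> p \<noteq> [] \<and> distinct p \<and>
     (\<forall>i. Suc i < length p \<longrightarrow> {p ! i, p ! Suc i} \<in> E)"

definition pedges :: "'v list \<Rightarrow> 'v set set" where
  "pedges p = {{p ! i, p ! Suc i} | i. Suc i < length p}"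

definition is_tree :: "'v set \<Rightarrow> 'v set set \<Rightarrow> bool" where
  "is_tree V E \<longleftrightarrow> finite V \<and> V \<noteq> {} \<and>
     E \<subseteq> {{u, v} | u v. u \<in> V \<and> v \<in> V \<and> u \<noteq> v} \<and>
     (\<forall>u\<in>V. \<forall>v\<in>V. \<exists>p. vpath E p \<and> hd p = u \<and> last p = v) \<and>
     \<not> (\<exists>p. vpath E p \<and> length p \<ge> 3 \<and> {last p, hd p} \<in> E)"

definition degree :: "'v set set \<Rightarrow> 'v \<Rightarrow> nat" where
  "degree E v = card {e \<in> E. v \<in> e}"

text \<open>A tree with root edge: a finite tree with a distinguished leaf \<rho>.\<close>
definition is_rtree :: "'v set \<Rightarrow> 'v set set \<Rightarrow> 'v \<Rightarrow> bool" where
  "is_rtree V E \<rho> \<longleftrightarrow> is_tree V E \<and> \<rho> \<in> V \<and> degree E \<rho> = 1"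

definition is_parent_edge :: "'v set set \<Rightarrow> 'v \<Rightarrow> 'v \<Rightarrow> 'v set \<Rightarrow> bool" where
  "is_parent_edge E \<rho> v e \<longleftrightarrow> v \<noteq> \<rho> \<and>
     (\<exists>p. vpath E p \<and> hd p = v \<and> last p = \<rho> \<and> length p \<ge> 2 \<and> e = {p ! 0, p ! 1})"

definition child_edges :: "'v set set \<Rightarrow> 'v \<Rightarrow> 'v \<Rightarrow> 'v set set" where
  "child_edges E \<rho> v = {c \<in> E. v \<in> c \<and> \<not> is_parent_edge E \<rho> v c}"

definition interior_vertex :: "'v set \<Rightarrow> 'v set set \<Rightarrow> 'v \<Rightarrow> 'v \<Rightarrow> bool" where
  "interior_vertex V E \<rho> v \<longleftrightarrow> v \<in> V \<and> v \<noteq> \<rho> \<and> degree E v \<noteq> 1"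

definition interior_edge :: "'v set \<Rightarrow> 'v set set \<Rightarrow> 'v \<Rightarrow> 'v set \<Rightarrow> bool" where
  "interior_edge V E \<rho> e \<longleftrightarrow> e \<in> E \<and> (\<forall>v\<in>e. interior_vertex V E \<rho> v)"

definition below :: "'v set set \<Rightarrow> 'v \<Rightarrow> 'v set \<Rightarrow> 'v set \<Rightarrow> bool" where
  "below E \<rho> e e' \<longleftrightarrow> e' \<in> E \<and>
     (\<exists>p. vpath E p \<and> hd p = \<rho> \<and> length p \<ge> 2 \<and>
          e' = {p ! (length p - 2), last p} \<and> e \<in> pedges p)"

definition consistent_assignment ::
  "'v set \<Rightarrow> 'v set set \<Rightarrow> 'v \<Rightarrow> ('v set \<Rightarrow> 'g::comm_monoid_add) \<Rightarrow> bool" where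
  "consistent_assignment V E \<rho> h \<longleftrightarrow>
     (\<forall>v e. interior_vertex V E \<rho> v \<longrightarrow> e \<in> E \<longrightarrow> is_parent_edge E \<rho> v e \<longrightarrow>
        h e = (\<Sum>c\<in>child_edges E \<rho> v. h c))"

text \<open>\<open>\<lambda> \<in> im(L^T)\<close>: \<open>\<lambda>\<close> (on \<open>E(T)\<close>) equals \<open>L \<circ> h\<close> for some consistent \<open>h\<close>.\<close>
definition in_im ::
  "('g::comm_monoid_add \<Rightarrow> 'l) \<Rightarrow> 'v set \<Rightarrow> 'v set set \<Rightarrow> 'v \<Rightarrow> ('v set \<Rightarrow> 'l) \<Rightarrow> bool" where
  "in_im L V E \<rho> lam \<longleftrightarrow>
     (\<exists>h. consistent_assignment V E \<rho> h \<and> (\<forall>e\<in>E. lam e = L (h e)))"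

section \<open>The subtrees \<open>T_{e,-}\<close> and \<open>T_{e,+}\<close>\<close>

definition minus_edges :: "'v set set \<Rightarrow> 'v \<Rightarrow> 'v set \<Rightarrow> 'v set set" where
  "minus_edges E \<rho> e = {e' \<in> E. below E \<rho> e e'}"

definition near_end :: "'v set set \<Rightarrow> 'v \<Rightarrow> 'v set \<Rightarrow> 'v" where
  "near_end E \<rho> e = (THE a. a \<in> e \<and>
     (\<exists>p. vpath E p \<and> hd p = \<rho> \<and> last p = a \<and> e \<notin> pedges p))"

definition plus_edges :: "'v set set \<Rightarrow> 'v \<Rightarrow> 'v set \<Rightarrow> 'v set set" where
  "plus_edges E \<rho> e = insert e {e' \<in> E. \<not> below E \<rho> e e'}"

definition Zm :: "nat \<Rightarrow> 'g::ab_group_add list set" where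
  "Zm m = {gs. length gs = m \<and> sum_list (butlast gs) = last gs}"

definition m_friendly :: "nat \<Rightarrow> ('g::ab_group_add \<Rightarrow> 'l) \<Rightarrow> bool" where
  "m_friendly m L \<longleftrightarrow>
     (\<forall>l \<in> map L ` Zm m. \<forall>i < m.
        {gs ! i | gs. gs \<in> Zm m \<and> map L gs = l} = {g. L g = l ! i})"

definition friendly :: "('g::ab_group_add \<Rightarrow> 'l) \<Rightarrow> bool" where
  "friendly L \<longleftrightarrow> (\<forall>m \<ge> 3. m_friendly m L)"

end

(* Every edge e of T is the parent edge of its endpoint b farther from the root, and T_{e,-}
   consists of the parent edges of the descendants of b.  Let h- and h+ be consistent assignments
   realising lambda- and lambda+.  As L (h- e) = L (h+ e), friendliness lets us change h- from the
   top down so that it still realises lambda- and stays consistent, but takes the value h+ e on e: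
   at a vertex u whose parent edge must receive a new value g, the values on the child edges and
   on the parent edge form a tuple in Z_{k+1}, friendliness yields a tuple with the same labels
   whose last entry is g, and the new child values are imposed recursively on the (disjoint)
   subtrees of the children.  Afterwards h- and h+ agree on e, and together they form a consistent
   assignment on T realising lambda. *)

theory Submission
  imports Defs
begin

lemma pedges_Nil [simp]: "pedges [] = {}"
  and pedges_singleton [simp]: "pedges [x] = {}"
  by (auto simp: pedges_def)

lemma pedges_conv_image: "pedges p = (\<lambda>i. {p ! i, p ! Suc i}) ` {i. Suc i < length p}"
  by (auto simp: pedges_def)

lemma pedges_Cons_Cons [simp]: "pedges (x # y # zs) = insert {x, y} (pedges (y # zs))"
proof -
  have "{i. Suc i < length (x # y # zs)} = insert 0 (Suc ` {i. Suc i < length (y # zs)})"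
    by (auto simp: image_iff) (metis less_Suc_eq_0_disj)
  then show ?thesis
    unfolding pedges_conv_image by (simp add: image_image)
qed

lemma pedges_append:
  "xs \<noteq> [] \<Longrightarrow> ys \<noteq> [] \<Longrightarrow> pedges (xs @ ys) = insert {last xs, hd ys} (pedges xs \<union> pedges ys)"
proof (induction xs rule: induct_list012)
  case (2 x)
  then show ?case by (cases ys) auto
qed auto

lemma pedges_rev [simp]: "pedges (rev xs) = pedges xs"
proof (induction xs rule: induct_list012)
  case (3 x y zs)
  then show ?case
    by (simp add: pedges_append [of "rev zs @ [y]" "[x]", simplified] insert_commute)
qed auto

lemma pedges_append_subset: "pedges xs \<subseteq> pedges (xs @ ys)" "pedges ys \<subseteq> pedges (xs @ ys)"
  by (cases "xs = []"; cases "ys = []"; auto simp: pedges_append)+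

lemma pedges_Cons_subset: "pedges xs \<subseteq> pedges (x # xs)"
  by (cases xs) auto

lemma pedges_append_Cons: "pedges (xs @ y # ys) = pedges (xs @ [y]) \<union> pedges (y # ys)"
  by (cases "xs = []") (auto simp: pedges_append)

lemma vpath_iff_pedges: "vpath E p \<longleftrightarrow> p \<noteq> [] \<and> distinct p \<and> pedges p \<subseteq> E"
  by (auto simp: vpath_def pedges_def)

lemma vpath_Nil [simp]: "\<not> vpath E []"
  by (simp add: vpath_def)

lemma vpath_subset_mono: "vpath E p \<Longrightarrow> E \<subseteq> E' \<Longrightarrow> vpath E' p"
  by (auto simp: vpath_iff_pedges)

lemma vpath_appendD:
  assumes "vpath E (xs @ ys)"
  shows "xs \<noteq> [] \<Longrightarrow> vpath E xs" and "ys \<noteq> [] \<Longrightarrow> vpath E ys"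
  using assms by (cases "xs = []"; cases "ys = []"; auto simp: vpath_iff_pedges pedges_append)+

lemma vpath_snoc:
  "xs \<noteq> [] \<Longrightarrow> vpath E (xs @ [y]) \<longleftrightarrow> vpath E xs \<and> y \<notin> set xs \<and> {last xs, y} \<in> E"
  by (auto simp: vpath_iff_pedges pedges_append)

lemma vpath_set_subset:
  assumes "vpath E p" "hd p \<in> V" "\<Union>E \<subseteq> V"
  shows "set p \<subseteq> V"
  using assms
proof (induction p rule: induct_list012)
  case (3 x y zs)
  then show ?case by (auto simp: vpath_iff_pedges)
qed auto

lemma vpath_diverging_cycle:
  assumes p: "vpath E (x # y # p)" and q: "vpath E (x # z # q)"
    and "y \<noteq> z" "last (y # p) = last (z # q)"
  shows "\<exists>c. vpath E c \<and> length c \<ge> 3 \<and> {last c, hd c} \<in> E"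
proof -
  \<comment> \<open>Closing the first vertex of y # p on z # q through x gives a cycle.\<close>
  obtain p1 m p2 where p': "y # p = p1 @ m # p2" "m \<in> set (z # q)" "\<forall>u\<in>set p1. u \<notin> set (z # q)"
    using split_list_first_prop [of "y # p" "\<lambda>u. u \<in> set (z # q)"] assms(4)
    by (metis last_in_set list.distinct(1))
  obtain q1 q2 where q': "z # q = q1 @ m # q2"
    using p'(2) split_list by metis
  define c where "c = (x # p1) @ m # rev q1"
  have "pedges (x # p1 @ [m]) \<subseteq> pedges (x # y # p)" "pedges (q1 @ [m]) \<subseteq> pedges (x # z # q)"
    using pedges_append_subset(1) [of "x # p1 @ [m]" p2] pedges_append_subset(1) [of "q1 @ [m]" q2]
      pedges_Cons_subset [of "q1 @ m # q2" x]
    unfolding p' q' by auto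
  then have "pedges (x # p1 @ [m]) \<subseteq> E" "pedges (q1 @ [m]) \<subseteq> E"
    using p q by (auto simp: vpath_iff_pedges)
  then have "pedges c \<subseteq> E"
    using pedges_rev [of "q1 @ [m]"] pedges_append_Cons [of "x # p1" m "rev q1"] by (simp add: c_def)
  moreover have "distinct c"
    using p q p'(3) unfolding vpath_iff_pedges p' q' c_def by auto
  ultimately have "vpath E c"
    by (simp add: vpath_iff_pedges c_def)
  moreover have "length c \<ge> 3"
    using \<open>y \<noteq> z\<close> p'(1) q' by (cases p1; cases q1) (auto simp: c_def)
  moreover have "{last c, hd c} \<in> E"
    using q q' by (cases q1) (auto simp: c_def vpath_iff_pedges last_rev insert_commute)
  ultimately show ?thesis
    by blast
qed

lemma vpath_unique_if_acyclic:
  assumes acyclic: "\<not> (\<exists>c. vpath E c \<and> length c \<ge> 3 \<and> {last c, hd c} \<in> E)"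
  shows "vpath E p \<Longrightarrow> vpath E q \<Longrightarrow> hd p = hd q \<Longrightarrow> last p = last q \<Longrightarrow> p = q"
proof (induction p arbitrary: q)
  case (Cons x p')
  then obtain q' where q: "q = x # q'"
    by (cases q) auto
  show ?case
  proof (cases "p' = [] \<or> q' = []")
    case True
    then show ?thesis
      using Cons.prems q by (auto simp: vpath_iff_pedges) (metis last_in_set)+
  next
    case False
    then obtain y p'' z q'' where yz: "p' = y # p''" "q' = z # q''"
      by (meson list.exhaust)
    have paths: "vpath E p'" "vpath E q'" "last p' = last q'"
      using Cons.prems q False vpath_appendD(2) [of E "[x]"] by auto
    have "y = z"
      using vpath_diverging_cycle [of E x y p'' z q''] Cons.prems(1,2) q yz paths(3) acyclic by auto
    then show ?thesis
      using Cons.IH [OF paths(1,2) _ paths(3)] yz q by simp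
  qed
qed simp

lemma ex_map_eq_if_distinct:
  assumes "distinct xs" "length ys = length xs"
  shows "\<exists>f. map f xs = ys"
  using assms
proof (induction xs arbitrary: ys)
  case (Cons x xs)
  then obtain y ys' where ys: "ys = y # ys'"
    by (cases ys) auto
  moreover obtain f where "map f xs = ys'"
    using Cons ys by auto
  moreover have "map (f(x := y)) xs = map f xs"
    by (rule map_fun_upd) (use Cons.prems(1) in simp)
  ultimately have "map (f(x := y)) (x # xs) = ys"
    unfolding list.map(2) fun_upd_same by simp
  then show ?case
    by blast
qed simp

lemma m_friendly_lift:
  assumes "m_friendly m L" "gs \<in> Zm m" "i < m" "L g = L (gs ! i)"
  shows "\<exists>gs'\<in>Zm m. map L gs' = map L gs \<and> gs' ! i = g"
proof -
  have "\<forall>j<m. {gs' ! j | gs'. gs' \<in> Zm m \<and> map L gs' = map L gs} = {g. L g = map L gs ! j}"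
    using assms(1) imageI [OF assms(2)] unfolding m_friendly_def by (rule bspec)
  then have "{gs' ! i | gs'. gs' \<in> Zm m \<and> map L gs' = map L gs} = {g. L g = map L gs ! i}"
    using assms(3) by blast
  moreover have "map L gs ! i = L g"
    using assms(2-4) by (simp add: Zm_def)
  ultimately have "g \<in> {gs' ! i | gs'. gs' \<in> Zm m \<and> map L gs' = map L gs}"
    by simp
  then show ?thesis
    by auto
qed

lemma m_friendly_sum_lift:
  fixes L :: "'g::ab_group_add \<Rightarrow> 'l" and f :: "'a \<Rightarrow> 'g"
  assumes "m_friendly (Suc (length ws)) L" "distinct ws" "L g = L (sum f (set ws))"
  shows "\<exists>f'. (\<forall>a\<in>set ws. L (f' a) = L (f a)) \<and> sum f' (set ws) = g"
proof -
  define k where "k = length ws"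
  define gs where "gs = map f ws @ [sum f (set ws)]"
  have "gs \<in> Zm (Suc k)"
    using assms(2) by (simp add: gs_def Zm_def k_def sum_list_distinct_conv_sum_set)
  moreover have "L g = L (gs ! k)"
    using assms(3) by (simp add: gs_def k_def nth_append)
  ultimately obtain gs' where gs': "gs' \<in> Zm (Suc k)" "map L gs' = map L gs" "gs' ! k = g"
    using m_friendly_lift [of "Suc k" L gs k g] assms(1) by (auto simp: k_def)
  then obtain f' where f': "map f' ws = butlast gs'"
    using ex_map_eq_if_distinct [OF assms(2), of "butlast gs'"] by (auto simp: Zm_def k_def)
  have "sum f' (set ws) = sum_list (map f' ws)"
    using assms(2) by (simp add: sum_list_distinct_conv_sum_set)
  also have "\<dots> = last gs'"
    using f' gs'(1) by (simp add: Zm_def)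
  also have "\<dots> = gs' ! k"
    using gs'(1) by (cases gs' rule: rev_cases) (auto simp: Zm_def k_def nth_append)
  also have "\<dots> = g"
    by (rule gs'(3))
  finally have "sum f' (set ws) = g" .
  have "map (L \<circ> f') ws = butlast (map L gs')"
    using f' by (simp add: map_butlast flip: map_map)
  also have "\<dots> = map (L \<circ> f) ws"
    using gs'(2) by (simp add: gs_def)
  finally have "\<forall>a\<in>set ws. L (f' a) = L (f a)"
    by (simp add: map_eq_conv)
  with \<open>sum f' (set ws) = g\<close> show ?thesis
    by blast
qed

lemma friendly_sum_lift:
  fixes L :: "'g::ab_group_add \<Rightarrow> 'l" and f :: "'a \<Rightarrow> 'g"
  assumes "friendly L" "finite A" "A \<noteq> {}" "L g = L (sum f A)"
  shows "\<exists>f'. (\<forall>a\<in>A. L (f' a) = L (f a)) \<and> sum f' A = g"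
proof -
  obtain ws where ws: "distinct ws" "set ws = A"
    using finite_distinct_list [OF assms(2)] by blast
  show ?thesis
  proof (cases "length ws = 1")
    case True
    \<comment> \<open>Friendliness says nothing about m = 2; here the single summand must simply become g.\<close>
    then obtain a where "A = {a}"
      using ws by (cases ws) auto
    then show ?thesis
      using assms(4) by (intro exI [of _ "\<lambda>_. g"]) simp
  next
    case False
    moreover have "length ws \<noteq> 0"
      using assms(3) ws by auto
    ultimately have "Suc (length ws) \<ge> 3"
      by linarith
    then have "m_friendly (Suc (length ws)) L"
      using assms(1) by (simp add: friendly_def)
    then show ?thesis
      using m_friendly_sum_lift [OF _ ws(1)] assms(4) ws(2) by blast
  qed
qed

lemma ex_fun_agreeing_on_disjoint:
  assumes "\<And>i j x. i \<in> I \<Longrightarrow> j \<in> I \<Longrightarrow> x \<in> S i \<Longrightarrow> x \<in> S j \<Longrightarrow> i = j"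
  shows "\<exists>h. \<forall>i\<in>I. \<forall>x\<in>S i. h x = H i x"
proof (intro exI ballI)
  fix i x assume "i \<in> I" "x \<in> S i"
  then have "(SOME j. j \<in> I \<and> x \<in> S j) = i"
    using assms by blast
  then show "H (SOME j. j \<in> I \<and> x \<in> S j) x = H i x"
    by simp
qed

locale rooted_tree =
  fixes V :: "'v set" and E :: "'v set set" and \<rho> :: 'v
  assumes tree: "is_tree V E" and root_in_V: "\<rho> \<in> V"
begin

lemma finite_V: "finite V"
  using tree by (simp add: is_tree_def)

lemma Union_edges_subset: "\<Union>E \<subseteq> V"
  using tree by (auto simp: is_tree_def)

lemma edgeE:
  assumes "c \<in> E"
  obtains x y where "c = {x, y}" "x \<in> V" "y \<in> V" "x \<noteq> y"
proof -
  have "c \<in> {{u, v} |u v. u \<in> V \<and> v \<in> V \<and> u \<noteq> v}"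
    using assms tree by (auto simp: is_tree_def)
  then show thesis
    using that by blast
qed

lemma vpath_unique: "vpath E p \<Longrightarrow> vpath E q \<Longrightarrow> hd p = hd q \<Longrightarrow> last p = last q \<Longrightarrow> p = q"
  using vpath_unique_if_acyclic tree by (auto simp: is_tree_def)

lemma vpath_subset_V: "vpath E p \<Longrightarrow> hd p \<in> V \<Longrightarrow> set p \<subseteq> V"
  using vpath_set_subset Union_edges_subset by blast

lemma last_vpath_in_V:
  assumes "vpath E p" "hd p \<in> V"
  shows "last p \<in> V"
proof -
  have "p \<noteq> []"
    using assms(1) by auto
  then show ?thesis
    using vpath_subset_V [OF assms] last_in_set by auto
qed

definition root_path :: "'v \<Rightarrow> 'v list" where
  "root_path v = (THE p. vpath E p \<and> hd p = \<rho> \<and> last p = v)"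

lemma root_path:
  assumes "v \<in> V"
  shows "vpath E (root_path v)" "hd (root_path v) = \<rho>" "last (root_path v) = v"
proof -
  obtain p where "vpath E p" "hd p = \<rho>" "last p = v"
    using tree root_in_V assms unfolding is_tree_def by blast
  moreover from this have "root_path v = p"
    unfolding root_path_def by (intro the_equality) (auto intro: vpath_unique)
  ultimately show "vpath E (root_path v)" "hd (root_path v) = \<rho>" "last (root_path v) = v"
    by simp_all
qed

lemma root_path_eqI:
  assumes "vpath E p" "hd p = \<rho>"
  shows "root_path (last p) = p"
proof -
  have "last p \<in> V"
    using last_vpath_in_V assms root_in_V by simp
  then show ?thesis
    using vpath_unique [OF root_path(1) assms(1)] root_path(2,3) assms(2) by simp
qed

lemma root_path_root [simp]: "root_path \<rho> = [\<rho>]"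
  using root_path_eqI [of "[\<rho>]"] by (simp add: vpath_def)

lemma root_path_not_Nil: "v \<in> V \<Longrightarrow> root_path v \<noteq> []"
  using root_path(1) vpath_Nil by metis

lemma root_path_Cons: "v \<in> V \<Longrightarrow> root_path v = \<rho> # tl (root_path v)"
  using root_path(2) root_path_not_Nil by (metis list.collapse)

lemma set_root_path_subset: "v \<in> V \<Longrightarrow> set (root_path v) \<subseteq> V"
  using vpath_subset_V [OF root_path(1)] root_path(2) root_in_V by simp

lemma distinct_root_path: "v \<in> V \<Longrightarrow> distinct (root_path v)"
  using root_path(1) by (simp add: vpath_def)

lemma root_path_prefix:
  assumes "v \<in> V" "root_path v = xs @ u # ys"
  shows "root_path u = xs @ [u]"
proof -
  have "vpath E (xs @ [u])"
    using vpath_appendD(1) [of E "xs @ [u]" ys] root_path(1) [OF assms(1)] assms(2) by simp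
  moreover have "hd (xs @ [u]) = \<rho>"
    using root_path(2) [OF assms(1)] assms(2) by (cases xs) auto
  ultimately show ?thesis
    using root_path_eqI by fastforce
qed

lemma root_path_ancestor:
  assumes "v \<in> V" "u \<in> set (root_path v)"
  obtains ys where "root_path v = root_path u @ ys"
proof -
  obtain xs ys where "root_path v = xs @ u # ys"
    using assms(2) split_list by metis
  then show thesis
    using that root_path_prefix [OF assms(1)] by simp
qed

lemma in_root_path_self: "v \<in> V \<Longrightarrow> v \<in> set (root_path v)"
  using root_path(3) root_path_not_Nil last_in_set by metis

lemma ancestor_trans: "v \<in> V \<Longrightarrow> u \<in> set (root_path v) \<Longrightarrow> set (root_path u) \<subseteq> set (root_path v)"
  by (erule root_path_ancestor) auto

lemma ancestor_antisym:
  assumes "u \<in> V" "v \<in> V" "u \<in> set (root_path v)" "v \<in> set (root_path u)"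
  shows "u = v"
proof -
  obtain xs ys where "root_path v = root_path u @ xs" "root_path u = root_path v @ ys"
    using root_path_ancestor assms by metis
  then have "root_path u = root_path v"
    by simp
  then show ?thesis
    using root_path(3) assms(1,2) by metis
qed

(* An edge is represented by its endpoint farther from the root; parent of the root is junk,
   so statements about parent assume v \<noteq> \<rho>. *)
definition parent :: "'v \<Rightarrow> 'v" where
  "parent v = last (butlast (root_path v))"

definition parent_edge :: "'v \<Rightarrow> 'v set" where
  "parent_edge v = {parent v, v}"

lemma root_path_parent_snoc:
  assumes "v \<in> V" "v \<noteq> \<rho>"
  obtains ys where "root_path v = ys @ [parent v, v]"
proof -
  obtain qs where qs: "root_path v = qs @ [v]"
    using root_path(3) [OF assms(1)] root_path_not_Nil [OF assms(1)] by (metis append_butlast_last_id)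
  moreover have "qs \<noteq> []"
    using qs root_path(2) [OF assms(1)] assms(2) by auto
  ultimately obtain ys u where ys: "root_path v = ys @ [u, v]"
    by (cases qs rule: rev_cases) auto
  then have "parent v = u"
    by (simp add: parent_def butlast_append)
  then show thesis
    using that ys by simp
qed

lemma root_path_parent:
  assumes "v \<in> V" "v \<noteq> \<rho>"
  shows "root_path v = root_path (parent v) @ [v]"
  using root_path_parent_snoc [OF assms] root_path_prefix [OF assms(1)] by (metis append.assoc append_Cons append_Nil)

lemma parent_in_root_path: "v \<in> V \<Longrightarrow> v \<noteq> \<rho> \<Longrightarrow> parent v \<in> set (root_path v)"
  by (erule root_path_parent_snoc) auto

lemma parent_in_V: "v \<in> V \<Longrightarrow> v \<noteq> \<rho> \<Longrightarrow> parent v \<in> V"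
  using parent_in_root_path set_root_path_subset by blast

lemma not_in_root_path_parent:
  assumes "v \<in> V" "v \<noteq> \<rho>"
  shows "v \<notin> set (root_path (parent v))"
  using distinct_root_path [OF assms(1)] unfolding root_path_parent [OF assms] by simp

lemma parent_neq: "v \<in> V \<Longrightarrow> v \<noteq> \<rho> \<Longrightarrow> parent v \<noteq> v"
  using not_in_root_path_parent in_root_path_self parent_in_V by metis

lemma parent_edge_in_E:
  assumes "v \<in> V" "v \<noteq> \<rho>"
  shows "parent_edge v \<in> E"
proof -
  have "vpath E (root_path (parent v) @ [v])"
    using root_path(1) [OF assms(1)] unfolding root_path_parent [OF assms] .
  then show ?thesis
    using vpath_snoc [of "root_path (parent v)" E v] root_path_not_Nil [OF parent_in_V [OF assms]]
      root_path(3) [OF parent_in_V [OF assms]]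
    by (simp add: parent_edge_def)
qed

lemma inj_on_parent_edge: "inj_on parent_edge (V - {\<rho>})"
proof (rule inj_onI)
  fix v w assume vw: "v \<in> V - {\<rho>}" "w \<in> V - {\<rho>}" "parent_edge v = parent_edge w"
  show "v = w"
  proof (rule ccontr)
    assume "v \<noteq> w"
    then have "v = parent w" "w = parent v"
      using vw(3) by (auto simp: parent_edge_def doubleton_eq_iff)
    moreover have "v \<in> V" "v \<noteq> \<rho>" "w \<in> V" "w \<noteq> \<rho>"
      using vw(1,2) by auto
    ultimately show False
      using \<open>v \<noteq> w\<close> parent_in_root_path ancestor_antisym by metis
  qed
qed

lemma root_path_snoc_edge:
  assumes "{x, y} \<in> E" "x \<in> V" "y \<notin> set (root_path x)"
  shows "root_path y = root_path x @ [y]"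
proof -
  have "vpath E (root_path x @ [y])"
    using assms root_path [OF assms(2)] root_path_not_Nil [OF assms(2)] vpath_snoc by metis
  then show ?thesis
    using root_path_eqI root_path(2) [OF assms(2)] root_path_not_Nil [OF assms(2)] by fastforce
qed

lemma parent_edge_if_not_ancestor:
  assumes "{x, y} \<in> E" "x \<in> V" "y \<in> V" "y \<notin> set (root_path x)"
  shows "y \<noteq> \<rho>" "{x, y} = parent_edge y"
proof -
  have y: "root_path y = root_path x @ [y]"
    using root_path_snoc_edge assms by blast
  then show "y \<noteq> \<rho>"
    using root_path_not_Nil [OF assms(2)] by auto
  then have "root_path (parent y) = root_path x"
    using y root_path_parent [OF assms(3)] by simp
  then have "parent y = x"
    using root_path(3) assms(2) parent_in_V [OF assms(3) \<open>y \<noteq> \<rho>\<close>] by metis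
  then show "{x, y} = parent_edge y"
    by (simp add: parent_edge_def)
qed

lemma edges_eq_parent_edges: "E = parent_edge ` (V - {\<rho>})"
proof (intro equalityI subsetI)
  fix c assume "c \<in> E"
  then obtain x y where c: "c = {x, y}" "x \<in> V" "y \<in> V" "x \<noteq> y"
    by (rule edgeE)
  show "c \<in> parent_edge ` (V - {\<rho>})"
  proof (cases "y \<in> set (root_path x)")
    case True
    then have "x \<notin> set (root_path y)"
      using ancestor_antisym c by blast
    then show ?thesis
      using parent_edge_if_not_ancestor [of y x] \<open>c \<in> E\<close> c by (auto simp: insert_commute)
  next
    case False
    then show ?thesis
      using parent_edge_if_not_ancestor [of x y] \<open>c \<in> E\<close> c by auto
  qed
qed (use parent_edge_in_E in auto)

lemma pedges_root_path_suffix: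
  assumes "v \<in> V" "root_path v = xs @ s"
  shows "pedges s = parent_edge ` set (tl s)"
  using assms(2)
proof (induction s arbitrary: xs rule: induct_list012)
  case (3 y z zs)
  have "root_path z = (xs @ [y]) @ [z]"
    using root_path_prefix [OF assms(1), of "xs @ [y]" z zs] "3.prems" by simp
  moreover have "z \<in> V" "z \<noteq> \<rho>"
    using "3.prems" set_root_path_subset [OF assms(1)] calculation by auto
  ultimately have "parent z = y"
    using root_path_parent by (metis append1_eq_conv last_snoc root_path(3) parent_in_V)
  then show ?case
    using "3.IH"(2) [of "xs @ [y]"] "3.prems" by (simp add: parent_edge_def)
qed auto

lemma pedges_root_path: "v \<in> V \<Longrightarrow> pedges (root_path v) = parent_edge ` (set (root_path v) - {\<rho>})"
  using pedges_root_path_suffix [of v "[]"] root_path_Cons distinct_root_path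
  by (metis distinct.simps(2) list.set(2) list.sel(3) Diff_insert_absorb self_append_conv2)

definition children :: "'v \<Rightarrow> 'v set" where
  "children v = {w \<in> V - {\<rho>}. parent w = v}"

definition locally_consistent :: "('v set \<Rightarrow> 'g::comm_monoid_add) \<Rightarrow> 'v \<Rightarrow> bool" where
  "locally_consistent h v \<longleftrightarrow>
     (children v \<noteq> {} \<longrightarrow> h (parent_edge v) = (\<Sum>w\<in>children v. h (parent_edge w)))"

lemma finite_children: "finite (children v)"
  using finite_V by (simp add: children_def)

lemma incident_edges_eq:
  assumes "v \<in> V" "v \<noteq> \<rho>"
  shows "{c \<in> E. v \<in> c} = insert (parent_edge v) (parent_edge ` children v)"
proof (intro equalityI subsetI)
  fix c assume "c \<in> {c \<in> E. v \<in> c}"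
  then obtain w where w: "w \<in> V - {\<rho>}" "c = parent_edge w" "v \<in> c"
    using edges_eq_parent_edges by auto
  then show "c \<in> insert (parent_edge v) (parent_edge ` children v)"
    by (cases "w = v") (auto simp: children_def parent_edge_def)
qed (use assms parent_edge_in_E in \<open>auto simp: children_def parent_edge_def\<close>)

lemma parent_edge_notin_children:
  assumes "v \<in> V" "v \<noteq> \<rho>"
  shows "parent_edge v \<notin> parent_edge ` children v"
proof
  assume "parent_edge v \<in> parent_edge ` children v"
  then obtain w where w: "w \<in> V - {\<rho>}" "parent w = v" "parent_edge v = parent_edge w"
    by (auto simp: children_def)
  then have "v = w"
    using inj_on_parent_edge assms by (auto dest: inj_onD)
  then show False
    using w parent_neq by blast
qed

lemma degree_eq_Suc_card_children:
  assumes "v \<in> V" "v \<noteq> \<rho>"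
  shows "degree E v = Suc (card (children v))"
proof -
  have "inj_on parent_edge (children v)"
    using inj_on_parent_edge by (rule inj_on_subset) (auto simp: children_def)
  then show ?thesis
    using assms finite_children parent_edge_notin_children [OF assms]
    by (simp add: degree_def incident_edges_eq card_image)
qed

lemma sum_children_reindex: "(\<Sum>c\<in>parent_edge ` children v. h c) = (\<Sum>w\<in>children v. h (parent_edge w))"
  using inj_on_parent_edge by (intro sum.reindex_cong [OF inj_on_subset]) (auto simp: children_def)

lemma locally_consistent_cong:
  assumes "v \<in> V" "v \<noteq> \<rho>" "\<And>c. c \<in> E \<Longrightarrow> v \<in> c \<Longrightarrow> h c = h' c"
  shows "locally_consistent h v \<longleftrightarrow> locally_consistent h' v"
proof -
  have "h c = h' c" if "c \<in> insert (parent_edge v) (parent_edge ` children v)" for c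
    using that assms incident_edges_eq by blast
  then have "h (parent_edge v) = h' (parent_edge v)"
    and "\<And>w. w \<in> children v \<Longrightarrow> h (parent_edge w) = h' (parent_edge w)"
    by auto
  then show ?thesis
    unfolding locally_consistent_def by (simp cong: sum.cong)
qed

definition descendants :: "'v \<Rightarrow> 'v set" where
  "descendants u = {w \<in> V. u \<in> set (root_path w)}"

definition subtree_edges :: "'v \<Rightarrow> 'v set set" where
  "subtree_edges u = parent_edge ` descendants u"

abbreviation upper_edges :: "'v \<Rightarrow> 'v set set" where
  "upper_edges b \<equiv> insert (parent_edge b) (E - subtree_edges b)"

lemma descendants_subset: "descendants u \<subseteq> V"
  by (auto simp: descendants_def)

lemma finite_descendants: "finite (descendants u)"
  using finite_V descendants_subset by (rule finite_subset [rotated])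

lemma self_in_descendants: "u \<in> V \<Longrightarrow> u \<in> descendants u"
  using in_root_path_self by (simp add: descendants_def)

lemma root_notin_descendants: "u \<noteq> \<rho> \<Longrightarrow> \<rho> \<notin> descendants u"
  by (simp add: descendants_def)

lemma parent_in_descendants:
  assumes "w \<in> descendants u" "w \<noteq> u"
  shows "parent w \<in> descendants u"
proof -
  have w: "w \<in> V" "u \<in> set (root_path w)"
    using assms(1) by (auto simp: descendants_def)
  then have "w \<noteq> \<rho>"
    using assms(2) by auto
  then show ?thesis
    using w assms(2) root_path_parent parent_in_V by (force simp: descendants_def)
qed

lemma child_descendants_subset:
  assumes "w \<in> children u"
  shows "descendants w \<subseteq> descendants u"
proof
  fix z assume "z \<in> descendants w"
  then have z: "z \<in> V" "w \<in> set (root_path z)"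
    by (auto simp: descendants_def)
  have "u \<in> set (root_path w)"
    using assms parent_in_root_path by (auto simp: children_def)
  then show "z \<in> descendants u"
    using z ancestor_trans by (auto simp: descendants_def)
qed

lemma notin_descendants_child:
  assumes "w \<in> children u"
  shows "u \<notin> descendants w"
  using assms not_in_root_path_parent by (auto simp: children_def descendants_def)

lemma descendants_children:
  assumes "u \<in> V"
  shows "descendants u = insert u (\<Union>w\<in>children u. descendants w)"
proof (intro equalityI subsetI)
  fix z assume z: "z \<in> descendants u"
  show "z \<in> insert u (\<Union>w\<in>children u. descendants w)"
  proof (cases "z = u")
    case False
    obtain xs ys where p: "root_path z = xs @ u # ys"
      using z split_list by (force simp: descendants_def)
    then have "ys \<noteq> []"
      using False root_path(3) z descendants_subset by fastforce
    then obtain w ys' where ys: "ys = w # ys'"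
      by (cases ys) auto
    have "z \<in> V"
      using z descendants_subset by auto
    then have w: "root_path w = (xs @ [u]) @ [w]" "w \<in> V"
      using root_path_prefix [of z "xs @ [u]" w ys'] p ys set_root_path_subset [OF \<open>z \<in> V\<close>] by auto
    then have "w \<noteq> \<rho>"
      by (cases "w = \<rho>") auto
    then have "root_path (parent w) = xs @ [u]"
      using w root_path_parent by simp
    then have "parent w = u"
      using root_path(3) [OF parent_in_V [OF w(2) \<open>w \<noteq> \<rho>\<close>]] by simp
    then have "w \<in> children u" "z \<in> descendants w"
      using w(2) \<open>w \<noteq> \<rho>\<close> \<open>z \<in> V\<close> p ys by (auto simp: children_def descendants_def)
    then show ?thesis
      by blast
  qed simp
qed (use assms self_in_descendants child_descendants_subset in auto)

lemma descendants_children_disjoint: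
  assumes "w \<in> children u" "w' \<in> children u" "z \<in> descendants w" "z \<in> descendants w'"
  shows "w = w'"
proof -
  have w: "w \<in> V" "w \<noteq> \<rho>" "parent w = u" "w' \<in> V" "w' \<noteq> \<rho>" "parent w' = u"
    using assms(1,2) by (auto simp: children_def)
  have z: "z \<in> V" "w \<in> set (root_path z)" "w' \<in> set (root_path z)"
    using assms(3,4) by (auto simp: descendants_def)
  obtain ys ys' where "root_path z = root_path w @ ys" "root_path z = root_path w' @ ys'"
    using root_path_ancestor [OF z(1,2)] root_path_ancestor [OF z(1,3)] by metis
  then have "root_path u @ w # ys = root_path u @ w' # ys'"
    using root_path_parent [of w] root_path_parent [of w'] w by simp
  then show ?thesis
    by simp
qed

lemma subtree_edges_subset:
  assumes "u \<noteq> \<rho>"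
  shows "subtree_edges u \<subseteq> E"
proof -
  have "descendants u \<subseteq> V - {\<rho>}"
    using descendants_subset root_notin_descendants [OF assms] by blast
  then show ?thesis
    using parent_edge_in_E by (auto simp: subtree_edges_def)
qed

lemma parent_edge_in_subtree_edges_iff:
  assumes "u \<noteq> \<rho>" "v \<in> V" "v \<noteq> \<rho>"
  shows "parent_edge v \<in> subtree_edges u \<longleftrightarrow> v \<in> descendants u"
proof -
  have "descendants u \<subseteq> V - {\<rho>}"
    using descendants_subset root_notin_descendants [OF assms(1)] by blast
  then show ?thesis
    using inj_on_parent_edge assms(2,3) by (auto simp: subtree_edges_def inj_on_image_mem_iff)
qed

lemma subtree_edges_children:
  assumes "u \<in> V"
  shows "subtree_edges u = insert (parent_edge u) (\<Union>w\<in>children u. subtree_edges w)"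
  unfolding subtree_edges_def descendants_children [OF assms] by blast

lemma incident_edges_subset_subtree_edges:
  assumes "u \<noteq> \<rho>" "v \<in> descendants u"
  shows "{c \<in> E. v \<in> c} \<subseteq> subtree_edges u"
proof -
  have "v \<in> V" "v \<noteq> \<rho>"
    using assms descendants_subset root_notin_descendants by auto
  moreover have "children v \<subseteq> descendants u"
  proof
    fix w assume "w \<in> children v"
    then have "w \<in> V" "root_path w = root_path v @ [w]"
      using root_path_parent by (auto simp: children_def)
    then show "w \<in> descendants u"
      using assms(2) by (auto simp: descendants_def)
  qed
  ultimately show ?thesis
    using incident_edges_eq assms(2) by (auto simp: subtree_edges_def)
qed

lemma subtree_edges_incident_outside:
  assumes "v \<in> V" "v \<notin> descendants b" "v \<in> c" "c \<in> subtree_edges b"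
  shows "c = parent_edge b"
proof -
  obtain z where z: "z \<in> descendants b" "c = parent_edge z"
    using assms(4) by (auto simp: subtree_edges_def)
  then have "v = parent z"
    using assms(2,3) by (auto simp: parent_edge_def)
  then have "z = b"
    using parent_in_descendants z(1) assms(2) by blast
  then show ?thesis
    using z(2) by simp
qed

lemma children_induct [consumes 2, case_names step]:
  assumes "u \<in> V" "u \<noteq> \<rho>"
    and step: "\<And>u. u \<in> V \<Longrightarrow> u \<noteq> \<rho> \<Longrightarrow> (\<And>w. w \<in> children u \<Longrightarrow> P w) \<Longrightarrow> P u"
  shows "P u"
  using assms(1,2)
proof (induction "card (descendants u)" arbitrary: u rule: less_induct)
  case less
  have "card (descendants w) < card (descendants u)" if "w \<in> children u" for w
  proof (rule psubset_card_mono [OF finite_descendants psubsetI])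
    show "descendants w \<subseteq> descendants u" "descendants w \<noteq> descendants u"
      using child_descendants_subset [OF that] notin_descendants_child [OF that]
        self_in_descendants [OF less.prems(1)] by auto
  qed
  then show ?case
    using less step by (auto simp: children_def)
qed

definition descends_within :: "'v set set \<Rightarrow> 'v \<Rightarrow> 'v \<Rightarrow> bool" where
  "descends_within E' r v \<longleftrightarrow>
     (\<exists>xs ys. root_path v = xs @ r # ys \<and> ys \<noteq> [] \<and> pedges (r # ys) \<subseteq> E')"

lemma descends_within_root:
  assumes "v \<in> V" "v \<noteq> \<rho>" "pedges (root_path v) \<subseteq> E'"
  shows "descends_within E' \<rho> v"
proof -
  obtain t where t: "root_path v = \<rho> # t"
    using root_path_Cons [OF assms(1)] by blast
  moreover have "t \<noteq> []"
    using t root_path(3) [OF assms(1)] assms(2) by auto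
  ultimately show ?thesis
    using assms(3)
    unfolding descends_within_def by (metis append_Nil)
qed

lemma descends_within_neq:
  assumes "v \<in> V" "descends_within E' r v"
  shows "r \<noteq> v" "v \<noteq> \<rho>"
proof -
  obtain xs ys where p: "root_path v = xs @ r # ys" "ys \<noteq> []"
    using assms(2) by (auto simp: descends_within_def)
  then have "v = last ys"
    using root_path(3) [OF assms(1)] by (simp add: last_append)
  then show "r \<noteq> v"
    using distinct_root_path [OF assms(1)] p last_in_set by fastforce
  show "v \<noteq> \<rho>"
    using p by (cases xs) auto
qed

lemma is_parent_edge_iff:
  assumes "E' \<subseteq> E" "v \<in> V" "descends_within E' r v"
  shows "is_parent_edge E' r v c \<longleftrightarrow> c = parent_edge v"
proof -
  obtain xs ys where p: "root_path v = xs @ r # ys" "ys \<noteq> []" "pedges (r # ys) \<subseteq> E'"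
    using assms(3) by (auto simp: descends_within_def)
  obtain zs u where zs: "ys = zs @ [u]"
    using p(2) by (cases ys rule: rev_cases) auto
  have "u = v"
    using root_path(3) [OF assms(2)] p(1) zs by simp
  have v: "v \<noteq> \<rho>" "r \<noteq> v"
    using descends_within_neq [OF assms(2,3)] by auto
  have "root_path (parent v) = xs @ r # zs"
    using root_path_parent [OF assms(2) v(1)] p(1) zs \<open>u = v\<close> by simp
  then have "parent v = last (r # zs)"
    using root_path(3) [OF parent_in_V [OF assms(2) v(1)]] by (simp add: last_append)
  then have nth: "rev (r # ys) ! 0 = v" "rev (r # ys) ! 1 = parent v"
    using zs \<open>u = v\<close> by (simp_all add: nth_append hd_rev [symmetric] hd_conv_nth)
  have "vpath E' (rev (r # ys))"
    using distinct_root_path [OF assms(2)] p pedges_rev [of "r # ys"] by (simp add: vpath_iff_pedges)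
  then have parent: "is_parent_edge E' r v (parent_edge v)"
    using v nth p(2) zs \<open>u = v\<close>
    unfolding is_parent_edge_def parent_edge_def
    by (intro conjI exI [of _ "rev (r # ys)"]) (auto simp: insert_commute hd_rev)
  show ?thesis
  proof
    assume "is_parent_edge E' r v c"
    then show "c = parent_edge v"
      using parent assms(1) vpath_subset_mono vpath_unique unfolding is_parent_edge_def by metis
  qed (use parent in simp)
qed

lemma child_edges_eq:
  assumes "E' \<subseteq> E" "v \<in> V" "descends_within E' r v" "{c \<in> E. v \<in> c} \<subseteq> E'"
  shows "child_edges E' r v = parent_edge ` children v"
proof -
  have "child_edges E' r v = {c \<in> E. v \<in> c} - {parent_edge v}"
    using assms(1,4) is_parent_edge_iff [OF assms(1-3)] by (auto simp: child_edges_def)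
  then show ?thesis
    using incident_edges_eq [OF assms(2) descends_within_neq(2) [OF assms(2,3)]]
      parent_edge_notin_children [OF assms(2) descends_within_neq(2) [OF assms(2,3)]]
    by auto
qed

lemma locally_consistent_if_consistent:
  assumes "E' \<subseteq> E" "consistent_assignment (\<Union>E') E' r h"
    and "v \<in> V" "descends_within E' r v" "{c \<in> E. v \<in> c} \<subseteq> E'"
  shows "locally_consistent h v"
  unfolding locally_consistent_def
proof
  assume "children v \<noteq> {}"
  have v: "v \<noteq> \<rho>" "r \<noteq> v"
    using descends_within_neq [OF assms(3,4)] by auto
  have "{c \<in> E'. v \<in> c} = {c \<in> E. v \<in> c}"
    using assms(1,5) by auto
  then have "degree E' v = Suc (card (children v))"
    using degree_eq_Suc_card_children [OF assms(3) v(1)] by (simp add: degree_def)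
  moreover have "parent_edge v \<in> E'"
    using assms(5) parent_edge_in_E [OF assms(3) v(1)] by (auto simp: parent_edge_def)
  ultimately have "interior_vertex (\<Union>E') E' r v"
    using v \<open>children v \<noteq> {}\<close> finite_children
    by (auto simp: interior_vertex_def parent_edge_def)
  then have "h (parent_edge v) = sum h (child_edges E' r v)"
    using assms(2) \<open>parent_edge v \<in> E'\<close> is_parent_edge_iff [OF assms(1,3,4)]
    by (simp add: consistent_assignment_def)
  then show "h (parent_edge v) = (\<Sum>w\<in>children v. h (parent_edge w))"
    using child_edges_eq [OF assms(1,3-5)] sum_children_reindex by simp
qed

lemma consistent_if_locally_consistent:
  assumes "\<And>v. v \<in> V \<Longrightarrow> v \<noteq> \<rho> \<Longrightarrow> locally_consistent h v"
  shows "consistent_assignment V E \<rho> h"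
  unfolding consistent_assignment_def
proof (intro allI impI)
  fix v c
  assume v: "interior_vertex V E \<rho> v" and c: "is_parent_edge E \<rho> v c"
  then have "v \<in> V" "v \<noteq> \<rho>"
    by (auto simp: interior_vertex_def)
  then have within: "descends_within E \<rho> v"
    using root_path(1) descends_within_root by (simp add: vpath_iff_pedges)
  have "children v \<noteq> {}"
    using v degree_eq_Suc_card_children [OF \<open>v \<in> V\<close> \<open>v \<noteq> \<rho>\<close>] by (auto simp: interior_vertex_def)
  then have "h (parent_edge v) = (\<Sum>w\<in>children v. h (parent_edge w))"
    using assms [OF \<open>v \<in> V\<close> \<open>v \<noteq> \<rho>\<close>] by (simp add: locally_consistent_def)
  then show "h c = sum h (child_edges E \<rho> v)"
    using c is_parent_edge_iff [OF _ \<open>v \<in> V\<close> within] child_edges_eq [OF _ \<open>v \<in> V\<close> within]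
      sum_children_reindex [of h v]
    by simp
qed

definition adjusted_below ::
  "('g::comm_monoid_add \<Rightarrow> 'l) \<Rightarrow> ('v set \<Rightarrow> 'g) \<Rightarrow> 'v \<Rightarrow> 'g \<Rightarrow> ('v set \<Rightarrow> 'g) \<Rightarrow> bool" where
  "adjusted_below L h u g h' \<longleftrightarrow>
     h' (parent_edge u) = g \<and> (\<forall>c\<in>subtree_edges u. L (h' c) = L (h c)) \<and>
     (\<forall>v\<in>descendants u. locally_consistent h' v)"

lemma subtree_edges_children_disjoint:
  assumes "w \<in> children u" "w' \<in> children u" "c \<in> subtree_edges w" "c \<in> subtree_edges w'"
  shows "w = w'"
proof -
  obtain z z' where z: "z \<in> descendants w" "z' \<in> descendants w'" "c = parent_edge z" "c = parent_edge z'"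
    using assms(3,4) by (auto simp: subtree_edges_def)
  moreover have "w \<noteq> \<rho>" "w' \<noteq> \<rho>"
    using assms(1,2) by (auto simp: children_def)
  ultimately have "z \<in> V - {\<rho>}" "z' \<in> V - {\<rho>}"
    using descendants_subset root_notin_descendants by auto
  then have "z = z'"
    using inj_onD [OF inj_on_parent_edge, of z z'] z(3,4) by simp
  then show ?thesis
    using descendants_children_disjoint assms(1,2) z(1,2) by blast
qed

lemma parent_edge_notin_subtree_edges_child:
  assumes "u \<in> V" "u \<noteq> \<rho>" "w \<in> children u"
  shows "parent_edge u \<notin> subtree_edges w"
  using parent_edge_in_subtree_edges_iff [OF _ assms(1,2)] notin_descendants_child [OF assms(3)] assms(3)
  by (auto simp: children_def)

lemma adjusted_below_if_children:
  assumes "u \<in> V" "u \<noteq> \<rho>" "\<forall>w\<in>children u. adjusted_below L h w (t w) (H w)"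
    and "children u \<noteq> {} \<Longrightarrow> sum t (children u) = g" "L g = L (h (parent_edge u))"
    and "h' (parent_edge u) = g" "\<And>w c. w \<in> children u \<Longrightarrow> c \<in> subtree_edges w \<Longrightarrow> h' c = H w c"
  shows "adjusted_below L h u g h'"
proof -
  have H: "H w (parent_edge w) = t w" "\<forall>c\<in>subtree_edges w. L (H w c) = L (h c)"
    "\<forall>v\<in>descendants w. locally_consistent (H w) v" if "w \<in> children u" for w
    using assms(3) that by (auto simp: adjusted_below_def)
  have "locally_consistent h' v" if v: "v \<in> descendants u" for v
  proof (cases "v = u")
    case True
    have "(\<Sum>w\<in>children u. h' (parent_edge w)) = sum t (children u)"
      using assms(7) H(1) self_in_descendants by (intro sum.cong) (auto simp: children_def subtree_edges_def)
    then show ?thesis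
      using True assms(4,6) by (simp add: locally_consistent_def)
  next
    case False
    then obtain w where w: "w \<in> children u" "v \<in> descendants w"
      using v descendants_children [OF assms(1)] by auto
    then have "w \<noteq> \<rho>" "v \<in> V" "v \<noteq> \<rho>"
      using descendants_subset root_notin_descendants by (auto simp: children_def)
    then have "locally_consistent h' v \<longleftrightarrow> locally_consistent (H w) v"
      using incident_edges_subset_subtree_edges [OF _ w(2)] assms(7) [OF w(1)]
      by (intro locally_consistent_cong) auto
    then show ?thesis
      using H(3) w by blast
  qed
  moreover have "L (h' c) = L (h c)" if c: "c \<in> subtree_edges u" for c
  proof (cases "c = parent_edge u")
    case True
    then show ?thesis
      using assms(5,6) by simp
  next
    case False
    then obtain w where "w \<in> children u" "c \<in> subtree_edges w"
      using c subtree_edges_children [OF assms(1)] by auto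
    then show ?thesis
      using assms(7) H(2) by auto
  qed
  ultimately show ?thesis
    using assms(6) unfolding adjusted_below_def by blast
qed

lemma ex_adjusted_below_if_children:
  assumes "u \<in> V" "u \<noteq> \<rho>" "\<forall>w\<in>children u. adjusted_below L h w (t w) (H w)"
    and "children u \<noteq> {} \<Longrightarrow> sum t (children u) = g" "L g = L (h (parent_edge u))"
  shows "\<exists>h'. adjusted_below L h u g h'"
proof -
  obtain h0 where h0: "\<forall>w\<in>children u. \<forall>c\<in>subtree_edges w. h0 c = H w c"
    using ex_fun_agreeing_on_disjoint [of "children u" subtree_edges H] subtree_edges_children_disjoint
    by blast
  then have "(h0(parent_edge u := g)) c = H w c" if "w \<in> children u" "c \<in> subtree_edges w" for w c
    using that parent_edge_notin_subtree_edges_child [OF assms(1,2)] by auto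
  then show ?thesis
    using adjusted_below_if_children [OF assms, of "h0(parent_edge u := g)"] by auto
qed

lemma ex_adjusted_below:
  fixes L :: "'g::ab_group_add \<Rightarrow> 'l"
  assumes "friendly L" "u \<in> V" "u \<noteq> \<rho>"
    and "\<forall>v\<in>descendants u. locally_consistent h v" "L g = L (h (parent_edge u))"
  shows "\<exists>h'. adjusted_below L h u g h'"
  using assms(2-5)
proof (induction u arbitrary: g rule: children_induct)
  case (step u)
  obtain t where t: "\<forall>w\<in>children u. L (t w) = L (h (parent_edge w))"
    "children u \<noteq> {} \<Longrightarrow> sum t (children u) = g"
  proof (cases "children u = {}")
    case False
    then have "h (parent_edge u) = (\<Sum>w\<in>children u. h (parent_edge w))"
      using step.prems(1) self_in_descendants [OF step.hyps(1)] by (simp add: locally_consistent_def)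
    then show ?thesis
      using friendly_sum_lift [OF assms(1) finite_children False] step.prems(2) that by metis
  qed (use that in simp)
  have "\<exists>h'. adjusted_below L h w (t w) h'" if "w \<in> children u" for w
    using step.IH [OF that] step.prems(1) child_descendants_subset [OF that] t(1) that by blast
  then obtain H where "\<forall>w\<in>children u. adjusted_below L h w (t w) (H w)"
    by metis
  then show ?case
    using ex_adjusted_below_if_children step.hyps t(2) step.prems(2) by blast
qed

lemma root_path_descendant:
  assumes "v \<in> descendants u"
  shows "\<exists>ys. root_path v = root_path u @ ys \<and> set ys \<subseteq> descendants u"
  using assms
proof (induction "length (root_path v)" arbitrary: v rule: less_induct)
  case less
  show ?case
  proof (cases "v = u")
    case False
    have v: "v \<in> V" "v \<noteq> \<rho>"
      using less.prems False by (auto simp: descendants_def)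
    have "parent v \<in> descendants u"
      using parent_in_descendants less.prems False by blast
    moreover have "length (root_path (parent v)) < length (root_path v)"
      using root_path_parent [OF v] by simp
    ultimately obtain ys where "root_path (parent v) = root_path u @ ys" "set ys \<subseteq> descendants u"
      using less.hyps by blast
    then show ?thesis
      using root_path_parent [OF v] less.prems by (intro exI [of _ "ys @ [v]"]) simp
  qed simp
qed

lemma descends_within_subtree_edges:
  assumes "b \<in> V" "b \<noteq> \<rho>" "v \<in> descendants b"
  shows "descends_within (subtree_edges b) (parent b) v"
proof -
  obtain ys where ys: "root_path v = root_path b @ ys" "set ys \<subseteq> descendants b"
    using root_path_descendant [OF assms(3)] by blast
  obtain xs where "root_path (parent b) = xs @ [parent b]"
    using root_path(3) root_path_not_Nil parent_in_V [OF assms(1,2)] by (metis append_butlast_last_id)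
  then have p: "root_path v = xs @ parent b # b # ys"
    using ys(1) root_path_parent [OF assms(1,2)] by simp
  have "pedges (parent b # b # ys) = parent_edge ` set (b # ys)"
    using pedges_root_path_suffix [OF _ p] assms(3) descendants_subset by auto
  also have "\<dots> \<subseteq> subtree_edges b"
    using ys(2) self_in_descendants [OF assms(1)] by (auto simp: subtree_edges_def)
  finally show ?thesis
    unfolding descends_within_def using p by blast
qed

lemma locally_consistent_below:
  assumes "b \<in> V" "b \<noteq> \<rho>" "v \<in> descendants b"
    and "consistent_assignment (\<Union>(subtree_edges b)) (subtree_edges b) (parent b) h"
  shows "locally_consistent h v"
  using locally_consistent_if_consistent [OF subtree_edges_subset [OF assms(2)] assms(4)]
    descends_within_subtree_edges [OF assms(1-3)] incident_edges_subset_subtree_edges [OF assms(2,3)]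
    assms(3) descendants_subset
  by blast

lemma locally_consistent_above:
  assumes "b \<in> V" "b \<noteq> \<rho>" "v \<in> V" "v \<noteq> \<rho>" "v \<notin> descendants b"
    and "consistent_assignment (\<Union>(upper_edges b))
           (upper_edges b) \<rho> h"
  shows "locally_consistent h v"
proof -
  have "parent_edge z \<notin> subtree_edges b" if "z \<in> set (root_path v)" "z \<noteq> \<rho>" for z
  proof -
    have "z \<in> V"
      using that set_root_path_subset [OF assms(3)] by blast
    moreover have "z \<notin> descendants b"
      using that ancestor_trans [OF assms(3)] assms(3,5) by (auto simp: descendants_def)
    ultimately show ?thesis
      using parent_edge_in_subtree_edges_iff [OF assms(2)] that(2) by blast
  qed
  then have "pedges (root_path v) \<subseteq> upper_edges b"
    using pedges_root_path [OF assms(3)] pedges_root_path [OF assms(3)] root_path(1) [OF assms(3)]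
    by (auto simp: vpath_iff_pedges)
  moreover have "{c \<in> E. v \<in> c} \<subseteq> upper_edges b"
    using subtree_edges_incident_outside [OF assms(3,5)] by blast
  moreover have "upper_edges b \<subseteq> E"
    using parent_edge_in_E [OF assms(1,2)] by blast
  ultimately show ?thesis
    using locally_consistent_if_consistent [OF _ assms(6) assms(3)] descends_within_root [OF assms(3,4)]
    by blast
qed

lemma root_path_nth_parent:
  assumes "w \<in> V" "w \<noteq> \<rho>"
  shows "length (root_path w) \<ge> 2" "root_path w ! (length (root_path w) - 2) = parent w"
proof -
  have q: "root_path (parent w) \<noteq> []" "last (root_path (parent w)) = parent w"
    using root_path_not_Nil root_path(3) parent_in_V [OF assms] by auto
  then show "length (root_path w) \<ge> 2"
    unfolding root_path_parent [OF assms] by (cases "root_path (parent w)") auto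
  show "root_path w ! (length (root_path w) - 2) = parent w"
    unfolding root_path_parent [OF assms] using q by (simp add: nth_append last_conv_nth)
qed

lemma parent_edge_in_pedges_root_path_iff:
  assumes "w \<in> V" "b \<in> V" "b \<noteq> \<rho>"
  shows "parent_edge b \<in> pedges (root_path w) \<longleftrightarrow> b \<in> set (root_path w)"
proof -
  have "set (root_path w) - {\<rho>} \<subseteq> V - {\<rho>}"
    using set_root_path_subset [OF assms(1)] by blast
  then show ?thesis
    using inj_on_parent_edge assms(2,3)
    by (auto simp: pedges_root_path [OF assms(1)] inj_on_image_mem_iff)
qed

lemma below_parent_edge_iff:
  assumes "b \<in> V" "b \<noteq> \<rho>"
  shows "below E \<rho> (parent_edge b) c \<longleftrightarrow> c \<in> subtree_edges b"
proof
  assume "below E \<rho> (parent_edge b) c"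
  then obtain p where p: "vpath E p" "hd p = \<rho>" "length p \<ge> 2"
      "c = {p ! (length p - 2), last p}" "parent_edge b \<in> pedges p"
    by (auto simp: below_def)
  define w where "w = last p"
  have w: "root_path w = p" "w \<in> V"
    using root_path_eqI last_vpath_in_V p(1,2) root_in_V by (simp_all add: w_def)
  moreover have "w \<noteq> \<rho>"
    using w p(3) by auto
  ultimately have "w \<in> descendants b" "c = parent_edge w"
    using p(4,5) root_path_nth_parent(2) [OF w(2)] parent_edge_in_pedges_root_path_iff [OF w(2) assms]
    by (simp_all add: descendants_def parent_edge_def w_def)
  then show "c \<in> subtree_edges b"
    by (simp add: subtree_edges_def)
next
  assume "c \<in> subtree_edges b"
  then obtain w where w: "w \<in> descendants b" "c = parent_edge w"
    by (auto simp: subtree_edges_def)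
  then have "w \<in> V" "w \<noteq> \<rho>" "b \<in> set (root_path w)"
    using assms(2) root_notin_descendants by (auto simp: descendants_def)
  then show "below E \<rho> (parent_edge b) c"
    unfolding below_def
    using w(2) parent_edge_in_E root_path [of w] root_path_nth_parent [of w]
      parent_edge_in_pedges_root_path_iff [OF _ assms]
    by (intro conjI exI [of _ "root_path w"]) (auto simp: parent_edge_def)
qed

lemma near_end_parent_edge:
  assumes "b \<in> V" "b \<noteq> \<rho>"
  shows "near_end E \<rho> (parent_edge b) = parent b"
  unfolding near_end_def
proof (rule the_equality)
  have "parent_edge b \<notin> pedges (root_path (parent b))"
    using parent_edge_in_pedges_root_path_iff parent_in_V not_in_root_path_parent assms by blast
  then show "parent b \<in> parent_edge b \<and>
      (\<exists>p. vpath E p \<and> hd p = \<rho> \<and> last p = parent b \<and> parent_edge b \<notin> pedges p)"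
    using root_path [OF parent_in_V [OF assms]] by (auto simp: parent_edge_def)
next
  fix x
  assume "x \<in> parent_edge b \<and> (\<exists>p. vpath E p \<and> hd p = \<rho> \<and> last p = x \<and> parent_edge b \<notin> pedges p)"
  then obtain p where x: "x = parent b \<or> x = b" "vpath E p" "hd p = \<rho>" "last p = x"
      "parent_edge b \<notin> pedges p"
    by (auto simp: parent_edge_def)
  have "parent_edge b \<in> pedges (root_path b)"
    using parent_edge_in_pedges_root_path_iff in_root_path_self assms by blast
  then show "x = parent b"
    using x root_path_eqI by metis
qed

lemma consistent_glue:
  assumes "b \<in> V" "b \<noteq> \<rho>" "\<forall>v\<in>descendants b. locally_consistent h' v"
    and "h' (parent_edge b) = hp (parent_edge b)"
    and "consistent_assignment (\<Union>(upper_edges b)) (upper_edges b) \<rho> hp"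
  shows "consistent_assignment V E \<rho> (\<lambda>c. if c \<in> subtree_edges b then h' c else hp c)"
    (is "consistent_assignment V E \<rho> ?h")
proof (rule consistent_if_locally_consistent)
  fix v assume v: "v \<in> V" "v \<noteq> \<rho>"
  show "locally_consistent ?h v"
  proof (cases "v \<in> descendants b")
    case True
    then have "locally_consistent ?h v \<longleftrightarrow> locally_consistent h' v"
      using incident_edges_subset_subtree_edges [OF assms(2)] by (intro locally_consistent_cong [OF v]) auto
    then show ?thesis
      using assms(3) True by simp
  next
    case False
    then have "locally_consistent ?h v \<longleftrightarrow> locally_consistent hp v"
      using subtree_edges_incident_outside [OF v(1) False] assms(4)
      by (intro locally_consistent_cong [OF v]) auto
    then show ?thesis
      using locally_consistent_above [OF assms(1,2) v False assms(5)] by simp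
  qed
qed

lemma in_im_glue:
  fixes L :: "'g::ab_group_add \<Rightarrow> 'l"
  assumes "friendly L" "b \<in> V" "b \<noteq> \<rho>"
    and lower: "in_im L (\<Union>(subtree_edges b)) (subtree_edges b) (parent b) lm"
    and upper: "in_im L (\<Union>(upper_edges b)) (upper_edges b) \<rho> lp"
    and agree: "lm (parent_edge b) = lp (parent_edge b)"
  shows "in_im L V E \<rho> (\<lambda>c. if c \<in> subtree_edges b then lm c else lp c)"
proof -
  obtain hm where hm: "consistent_assignment (\<Union>(subtree_edges b)) (subtree_edges b) (parent b) hm"
    "\<forall>c\<in>subtree_edges b. lm c = L (hm c)"
    using lower by (auto simp: in_im_def)
  obtain hp where hp: "consistent_assignment (\<Union>(upper_edges b)) (upper_edges b) \<rho> hp"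
    "\<forall>c\<in>upper_edges b. lp c = L (hp c)"
    using upper by (auto simp: in_im_def)
  have "parent_edge b \<in> subtree_edges b"
    using self_in_descendants [OF assms(2)] by (simp add: subtree_edges_def)
  then have "L (hp (parent_edge b)) = L (hm (parent_edge b))"
    using hm(2) hp(2) agree by simp
  then obtain h' where h': "adjusted_below L hm b (hp (parent_edge b)) h'"
    using ex_adjusted_below [OF assms(1-3)] locally_consistent_below [OF assms(2,3) _ hm(1)] by metis
  then have "consistent_assignment V E \<rho> (\<lambda>c. if c \<in> subtree_edges b then h' c else hp c)"
    using consistent_glue [OF assms(2,3) _ _ hp(1)] by (simp add: adjusted_below_def)
  moreover have "(if c \<in> subtree_edges b then lm c else lp c)
      = L (if c \<in> subtree_edges b then h' c else hp c)" if "c \<in> E" for c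
    using that hm(2) hp(2) h' by (simp add: adjusted_below_def)
  ultimately show ?thesis
    unfolding in_im_def by blast
qed

end

theorem lemma3p6:
  fixes L :: "'g::{ab_group_add, finite} \<Rightarrow> 'l::finite"
    and V :: "'v set" and E :: "'v set set" and \<rho> :: 'v and e :: "'v set"
    and lm lp :: "'v set \<Rightarrow> 'l"
  assumes "friendly L"
    and "is_rtree V E \<rho>"
    and "interior_edge V E \<rho> e"
    and "in_im L (\<Union>(minus_edges E \<rho> e)) (minus_edges E \<rho> e) (near_end E \<rho> e) lm"
    and "in_im L (\<Union>(plus_edges E \<rho> e)) (plus_edges E \<rho> e) \<rho> lp"
    and "lm e = lp e"
  shows "in_im L V E \<rho> (\<lambda>e'. if e' \<in> minus_edges E \<rho> e then lm e' else lp e')"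
proof -
  interpret rooted_tree V E \<rho>
    using assms(2) by unfold_locales (auto simp: is_rtree_def)
  have "e \<in> parent_edge ` (V - {\<rho>})"
    using assms(3) edges_eq_parent_edges by (simp add: interior_edge_def)
  then obtain b where b: "b \<in> V" "b \<noteq> \<rho>" "e = parent_edge b"
    by blast
  have "minus_edges E \<rho> e = subtree_edges b"
    using below_parent_edge_iff [OF b(1,2)] subtree_edges_subset [OF b(2)] b(3)
    by (auto simp: minus_edges_def)
  moreover have "plus_edges E \<rho> e = upper_edges b"
    using below_parent_edge_iff [OF b(1,2)] b(3) by (auto simp: plus_edges_def)
  moreover have "near_end E \<rho> e = parent b"
    using near_end_parent_edge [OF b(1,2)] b(3) by simp
  ultimately show ?thesis
    using in_im_glue [OF assms(1) b(1,2)] assms(4-6) b(3) by simp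
qed

end
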